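(* Let $\alpha\in(0,1)$ and suppose there exist $b_\alpha>0$ and $M_\alpha\ge\max_{F,G\in\mathcal D^\Delta}\|F-G\|$ such that for all $F\in\mathcal D^\Delta$, $|F(\mathrm{VaR}_\alpha(F)+b_\alpha y)-\alpha|\ge|y|$ for all $y\in[-M_\alpha,M_\alpha]$. Then for every $F\in\mathcal D^\Delta$ and every distribution function $G$ on $\mathbb R$ with $\|F-G\|_\infty<M_\alpha$, $$|\mathrm{VaR}_\alpha(F)-\mathrm{VaR}_\alpha(G)|\le b_\alpha\|F-G\|_\infty.$$
   Context: Let $F^{(1)},\dots,F^{(K)}$ be distribution functions on $\mathbb R$, $\Delta_{K-1}$ the probability simplex in $\mathbb R^K$ and $\mathcal D^\Delta=\{\sum_ip_iF^{(i)}:p\in\Delta_{K-1}\}$. $\|F\|_\infty=\sup_x|F(x)|$ and $\|F\|=\max\{\|F\|_\infty,|\int_{-\infty}^0x\,dF(x)|,|\int_0^\infty x\,dF(x)|\}$ (Lebesgue–Stieltjes integrals). $\mathrm{VaR}_\alpha(F)=\inf\{y\in\mathbb R:F(y)\ge\alpha\}$. *)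

theory Defs
  imports "HOL-Analysis.Analysis"
begin

definition is_dist_fun :: "(real \<Rightarrow> real) \<Rightarrow> bool" where
  "is_dist_fun F \<longleftrightarrow> mono F \<and> (\<forall>x. continuous (at_right x) F)
     \<and> (F \<longlongrightarrow> 0) at_bot \<and> (F \<longlongrightarrow> 1) at_top"

definition prob_simplex :: "nat \<Rightarrow> (nat \<Rightarrow> real) set" where
  "prob_simplex K = {p. (\<forall>i<K. 0 \<le> p i) \<and> (\<Sum>i<K. p i) = 1}"

definition mixtures :: "nat \<Rightarrow> (nat \<Rightarrow> real \<Rightarrow> real) \<Rightarrow> (real \<Rightarrow> real) set" where
  "mixtures K Fs = {(\<lambda>x. \<Sum>i<K. p i * Fs i x) | p. p \<in> prob_simplex K}"

definition sup_norm :: "(real \<Rightarrow> real) \<Rightarrow> real" where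
  "sup_norm F = (SUP x. \<bar>F x\<bar>)"

definition ls_neg :: "(real \<Rightarrow> real) \<Rightarrow> real" where
  "ls_neg F = set_lebesgue_integral (interval_measure F) {..0} (\<lambda>x. x)"

definition ls_pos :: "(real \<Rightarrow> real) \<Rightarrow> real" where
  "ls_pos F = set_lebesgue_integral (interval_measure F) {0..} (\<lambda>x. x)"

text \<open>The norm ||F - G|| for distribution functions F, G (the integral w.r.t.
  F - G is the difference of the integrals w.r.t. F and G).\<close>
definition diff_norm :: "(real \<Rightarrow> real) \<Rightarrow> (real \<Rightarrow> real) \<Rightarrow> real" where
  "diff_norm F G = max (sup_norm (\<lambda>x. F x - G x))
      (max \<bar>ls_neg F - ls_neg G\<bar> \<bar>ls_pos F - ls_pos G\<bar>)"

definition VaR :: "real \<Rightarrow> (real \<Rightarrow> real) \<Rightarrow> real" where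
  "VaR \<alpha> F = Inf {y. \<alpha> \<le> F y}"

end

theory Submission
  imports Defs
begin

text \<open>\<open>VaR\<^sub>\<alpha>\<close> is the lower Galois adjoint of a distribution function: \<open>VaR\<^sub>\<alpha> F \<le> z\<close> iff
  \<open>\<alpha> \<le> F z\<close>. Hence if \<open>G\<close> is within \<open>e\<close> of \<open>F\<close>, then \<open>G \<ge> \<alpha>\<close> wherever \<open>F \<ge> \<alpha> + e\<close> and
  \<open>G < \<alpha>\<close> wherever \<open>F \<le> \<alpha> - y\<close> with \<open>y > e\<close>. The growth condition places such points at
  \<open>VaR\<^sub>\<alpha> F + b e\<close> and \<open>VaR\<^sub>\<alpha> F - b y\<close>, which pins \<open>VaR\<^sub>\<alpha> G\<close> to the interval
  \<open>[VaR\<^sub>\<alpha> F - b y, VaR\<^sub>\<alpha> F + b e]\<close>; letting \<open>y\<close> decrease to \<open>e\<close> gives the claim.\<close>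

lemma dist_fun_bounds:
  assumes "is_dist_fun F"
  shows "0 \<le> F x" "F x \<le> 1"
proof -
  have mono: "mono F" and lim0: "(F \<longlongrightarrow> 0) at_bot" and lim1: "(F \<longlongrightarrow> 1) at_top"
    using assms unfolding is_dist_fun_def by auto
  show "0 \<le> F x"
    by (rule tendsto_upperbound[OF lim0])
       (auto simp: eventually_at_bot_linorder intro!: exI[of _ x] monoD[OF mono])
  show "F x \<le> 1"
    by (rule tendsto_lowerbound[OF lim1])
       (auto simp: eventually_at_top_linorder intro!: exI[of _ x] monoD[OF mono])
qed

lemma mixture_is_dist_fun:
  assumes "\<And>i. i < K \<Longrightarrow> is_dist_fun (Fs i)" and "F \<in> mixtures K Fs"
  shows "is_dist_fun F"
proof -
  obtain p where p: "p \<in> prob_simplex K" and F: "F = (\<lambda>x. \<Sum>i<K. p i * Fs i x)"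
    using assms(2) unfolding mixtures_def by auto
  have p_nonneg: "\<And>i. i < K \<Longrightarrow> 0 \<le> p i" and p_sum: "(\<Sum>i<K. p i) = 1"
    using p unfolding prob_simplex_def by auto
  have "mono F"
    unfolding F mono_def using assms(1) p_nonneg
    by (auto intro!: sum_mono mult_left_mono simp: is_dist_fun_def mono_def)
  moreover have "continuous (at_right x) F" for x
    unfolding F using assms(1) by (auto intro!: continuous_sum continuous_mult simp: is_dist_fun_def)
  moreover have "(F \<longlongrightarrow> (\<Sum>i<K. p i * 0)) at_bot"
    unfolding F using assms(1) by (intro tendsto_intros) (auto simp: is_dist_fun_def)
  moreover have "(F \<longlongrightarrow> (\<Sum>i<K. p i * 1)) at_top"
    unfolding F using assms(1) by (intro tendsto_intros) (auto simp: is_dist_fun_def)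
  ultimately show ?thesis
    unfolding is_dist_fun_def using p_sum by simp
qed

lemma VaR_le:
  assumes "is_dist_fun F" "0 < \<alpha>" and "\<alpha> \<le> F z"
  shows "VaR \<alpha> F \<le> z"
proof -
  have "(F \<longlongrightarrow> 0) at_bot"
    using assms(1) unfolding is_dist_fun_def by simp
  then obtain L where L: "\<And>y. y \<le> L \<Longrightarrow> F y < \<alpha>"
    using order_tendstoD(2)[of F 0 at_bot \<alpha>] assms(2) by (auto simp: eventually_at_bot_linorder)
  have "L \<le> y" if "\<alpha> \<le> F y" for y
    using L[of y] that by fastforce
  then have "bdd_below {y. \<alpha> \<le> F y}"
    by (intro bdd_belowI[of _ L]) simp
  then show ?thesis
    unfolding VaR_def using assms(3) by (intro cInf_lower) auto
qed

lemma alpha_le_at_VaR: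
  assumes "is_dist_fun F" "0 < \<alpha>" "\<alpha> < 1"
  shows "\<alpha> \<le> F (VaR \<alpha> F)"
proof -
  let ?v = "VaR \<alpha> F"
  have mono: "mono F" and lim1: "(F \<longlongrightarrow> 1) at_top" and rcont: "continuous (at_right ?v) F"
    using assms(1) unfolding is_dist_fun_def by auto
  obtain N where "\<And>y. N \<le> y \<Longrightarrow> \<alpha> < F y"
    using order_tendstoD(1)[OF lim1 assms(3)] by (auto simp: eventually_at_top_linorder)
  then have nonempty: "{y. \<alpha> \<le> F y} \<noteq> {}"
    by (metis empty_iff less_le_not_le mem_Collect_eq order_refl)
  have "\<alpha> \<le> F x" if x: "?v < x" for x
  proof -
    obtain s where "\<alpha> \<le> F s" "s < x"
      using cInf_lessD[OF nonempty] x unfolding VaR_def by auto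
    then show ?thesis
      using monoD[OF mono, of s x] by simp
  qed
  then have "eventually (\<lambda>x. \<alpha> \<le> F x) (at_right ?v)"
    by (rule eventually_mono[OF eventually_at_right_less])
  moreover have "(F \<longlongrightarrow> F ?v) (at_right ?v)"
    using rcont by (simp add: continuous_within)
  ultimately show ?thesis
    by (intro tendsto_lowerbound) auto
qed

lemma VaR_le_iff:
  assumes "is_dist_fun F" "0 < \<alpha>" "\<alpha> < 1"
  shows "VaR \<alpha> F \<le> z \<longleftrightarrow> \<alpha> \<le> F z"
  using VaR_le[OF assms(1,2)] alpha_le_at_VaR[OF assms] assms(1)
  by (meson is_dist_fun_def monoD order_trans)

lemma dist_fun_diff_le_sup_norm:
  assumes "is_dist_fun F" "is_dist_fun G"
  shows "\<bar>F x - G x\<bar> \<le> sup_norm (\<lambda>x. F x - G x)"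
proof -
  have "\<bar>F y - G y\<bar> \<le> 1" for y
    using dist_fun_bounds[OF assms(1), of y] dist_fun_bounds[OF assms(2), of y] by linarith
  then have "bdd_above (range (\<lambda>y. \<bar>F y - G y\<bar>))"
    by (intro bdd_aboveI[of _ 1]) auto
  then show ?thesis
    unfolding sup_norm_def by (rule cSUP_upper[OF UNIV_I])
qed

lemma VaR_le_VaR_plus:
  assumes F: "is_dist_fun F" and G: "is_dist_fun G" and \<alpha>: "0 < \<alpha>" "\<alpha> < 1"
    and "0 \<le> b" "0 \<le> e" and close: "\<And>x. \<bar>F x - G x\<bar> \<le> e"
    and growth: "e \<le> \<bar>F (VaR \<alpha> F + b * e) - \<alpha>\<bar>"
  shows "VaR \<alpha> G \<le> VaR \<alpha> F + b * e"
proof -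
  let ?z = "VaR \<alpha> F + b * e"
  have "\<alpha> \<le> F ?z"
    using VaR_le_iff[OF F \<alpha>, of ?z] \<open>0 \<le> b\<close> \<open>0 \<le> e\<close> by simp
  with growth have "\<alpha> + e \<le> F ?z"
    by linarith
  then have "\<alpha> \<le> G ?z"
    using close[of ?z] by linarith
  then show ?thesis
    using VaR_le_iff[OF G \<alpha>] by simp
qed

lemma VaR_minus_le_VaR:
  assumes F: "is_dist_fun F" and G: "is_dist_fun G" and \<alpha>: "0 < \<alpha>" "\<alpha> < 1"
    and "0 < b" "0 \<le> e" "e < M" and close: "\<And>x. \<bar>F x - G x\<bar> \<le> e"
    and growth: "\<And>y. e < y \<Longrightarrow> y < M \<Longrightarrow> y \<le> \<bar>F (VaR \<alpha> F - b * y) - \<alpha>\<bar>"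
  shows "VaR \<alpha> F - b * e \<le> VaR \<alpha> G"
proof -
  have "(VaR \<alpha> F - VaR \<alpha> G) / b \<le> e"
  proof (rule dense_ge_bounded[OF \<open>e < M\<close>])
    fix y assume y: "e < y" "y < M"
    let ?z = "VaR \<alpha> F - b * y"
    have "0 < b * y"
      using \<open>0 < b\<close> \<open>0 \<le> e\<close> y(1) by simp
    then have "F ?z < \<alpha>"
      using VaR_le_iff[OF F \<alpha>, of ?z] by simp
    with growth[OF y] have "F ?z \<le> \<alpha> - y"
      by linarith
    then have "G ?z < \<alpha>"
      using close[of ?z] y(1) by linarith
    then have "?z < VaR \<alpha> G"
      using VaR_le_iff[OF G \<alpha>] by (meson not_le)
    then show "(VaR \<alpha> F - VaR \<alpha> G) / b \<le> y"
      using \<open>0 < b\<close> by (simp add: divide_le_eq algebra_simps)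
  qed
  then show ?thesis
    using \<open>0 < b\<close> by (simp add: divide_le_eq algebra_simps)
qed

theorem lemma31:
  fixes K :: nat and Fs :: "nat \<Rightarrow> real \<Rightarrow> real"
    and \<alpha> b M :: real
  assumes dist: "\<And>i. i < K \<Longrightarrow> is_dist_fun (Fs i)"
    and alpha: "0 < \<alpha>" "\<alpha> < 1"
    and b: "0 < b"
    and M: "\<forall>F\<in>mixtures K Fs. \<forall>G\<in>mixtures K Fs. diff_norm F G \<le> M"
    and growth: "\<forall>F\<in>mixtures K Fs. \<forall>y. -M \<le> y \<and> y \<le> M \<longrightarrow>
                    \<bar>F (VaR \<alpha> F + b * y) - \<alpha>\<bar> \<ge> \<bar>y\<bar>"
  shows "\<forall>F\<in>mixtures K Fs. \<forall>G. is_dist_fun G \<and> sup_norm (\<lambda>x. F x - G x) < M \<longrightarrow>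
           \<bar>VaR \<alpha> F - VaR \<alpha> G\<bar> \<le> b * sup_norm (\<lambda>x. F x - G x)"
proof (intro ballI allI impI)
  fix F G
  assume F_mix: "F \<in> mixtures K Fs" and "is_dist_fun G \<and> sup_norm (\<lambda>x. F x - G x) < M"
  then have F: "is_dist_fun F" and G: "is_dist_fun G" and e_M: "sup_norm (\<lambda>x. F x - G x) < M"
    using mixture_is_dist_fun[OF dist] by auto
  let ?e = "sup_norm (\<lambda>x. F x - G x)"
  have close: "\<bar>F x - G x\<bar> \<le> ?e" for x
    using dist_fun_diff_le_sup_norm[OF F G] .
  then have "0 \<le> ?e"
    by (meson abs_ge_zero order_trans)
  have F_growth: "\<bar>y\<bar> \<le> \<bar>F (VaR \<alpha> F + b * y) - \<alpha>\<bar>" if "\<bar>y\<bar> \<le> M" for y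
    using growth F_mix that by (auto simp: abs_le_iff)
  have "VaR \<alpha> G \<le> VaR \<alpha> F + b * ?e"
    using VaR_le_VaR_plus[OF F G alpha _ \<open>0 \<le> ?e\<close> close] b F_growth[of ?e] \<open>0 \<le> ?e\<close> e_M
    by simp
  moreover have "VaR \<alpha> F - b * ?e \<le> VaR \<alpha> G"
  proof (rule VaR_minus_le_VaR[OF F G alpha b \<open>0 \<le> ?e\<close> e_M close])
    fix y assume "?e < y" "y < M"
    then show "y \<le> \<bar>F (VaR \<alpha> F - b * y) - \<alpha>\<bar>"
      using F_growth[of "- y"] \<open>0 \<le> ?e\<close> by simp
  qed
  ultimately show "\<bar>VaR \<alpha> F - VaR \<alpha> G\<bar> \<le> b * ?e"
    by linarith
qed

end
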